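(* Let $f$ be a homeomorphism of a compact metric space $(X,d)$ and let $\mu$ be a Borel measure on $X$ with $\mu(X)>0$. Then: (i) $\mu$ is expansive with respect to $f$ if and only if $UE^\mu_f(X)=X$; (ii) $f$ is measure-expansive if and only if $UE^M_f(X)=X$; (iii) $\mu$ has shadowing with respect to $f$ if and only if $Sh^\mu_f(X)=X$.
   Context: $B(x,\epsilon)=\{y:d(x,y)<\epsilon\}$. For $\mathfrak{c}>0$ and $x\in X$, $\Phi^{\mathfrak{c}}_f(x)=\{y\in X: d(f^n(x),f^n(y))\le\mathfrak{c}\ \forall n\in\mathbb{Z}\}$. $\mu$ is expansive (w.r.t. $f$) if there is $\mathfrak{c}>0$ with $\mu(\Phi^{\mathfrak{c}}_f(x))=0$ for every $x\in X$. $f$ is measure-expansive if there is $\mathfrak{c}>0$ such that for every non-atomic Borel measure $\nu$ on $X$ and every $x\in X$, $\nu(\Phi^{\mathfrak{c}}_f(x))=0$. For a point $x$ and $\mathfrak{c}>0$, and $z\in B(x,\mathfrak{c})$, let $\Gamma^{\mathfrak{c}}_f(z)=\{y\in B(x,\mathfrak{c}): d(f^n(y),f^n(z))\le\mathfrak{c}\ \forall n\in\mathbb{Z}\}$. $x$ is a $\mu$-uniformly expansive point of $f$ if there is $\mathfrak{c}>0$ with $\mu(\Gamma^{\mathfrak{c}}_f(z))=0$ for every $z\in B(x,\mathfrak{c})$; $UE^\mu_f(X)$ is the set of such points. $x$ is a uniformly measure expansive point of $f$ if there is $\mathfrak{c}>0$ such that for every non-atomic Borel measure $\nu$ on $X$,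 $\nu(\Gamma^{\mathfrak{c}}_f(z))=0$ for every $z\in B(x,\mathfrak{c})$; $UE^M_f(X)$ is the set of such points. A $\delta$-pseudo orbit for $f$ is $\{x_n\}_{n\in\mathbb{Z}}$ with $d(f(x_n),x_{n+1})<\delta$ for all $n$; it is through a set $B$ if $x_0\in B$; it is $\epsilon$-traced if there is $y\in X$ with $d(f^n(y),x_n)<\epsilon$ for all $n$. $\mu$ has shadowing (w.r.t. $f$) if for every $\epsilon>0$ there are $\delta>0$ and a Borel set $B$ with $\mu(X\setminus B)=0$ such that every $\delta$-pseudo orbit through $B$ is $\epsilon$-traced. $x$ is a $\mu$-shadowable point of $f$ if for every $\epsilon>0$ there are $\delta>0$ and a Borel set $B$ with $\mu(X\setminus B)=0$ such that every $\delta$-pseudo orbit through $B\cap B(x,\delta)$ is $\epsilon$-traced; $Sh^\mu_f(X)$ is the set of such points. *)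

theory Defs
  imports "HOL-Analysis.Analysis" "HOL-Probability.Probability"
begin

text \<open>The compact metric space X is the (compact) universe of a metric-space type 'a.
  Integer iterates of a homeomorphism f.\<close>

definition iter_int :: "('a \<Rightarrow> 'a) \<Rightarrow> int \<Rightarrow> 'a \<Rightarrow> 'a" where
  "iter_int f n = (if 0 \<le> n then f ^^ nat n else inv f ^^ nat (- n))"

definition is_homeomorphism :: "('a::topological_space \<Rightarrow> 'a) \<Rightarrow> bool" where
  "is_homeomorphism f \<longleftrightarrow> bij f \<and> continuous_on UNIV f \<and> continuous_on UNIV (inv f)"

definition borel_measure :: "'a::topological_space measure \<Rightarrow> bool" where
  "borel_measure M \<longleftrightarrow> sets M = sets borel"

definition non_atomic :: "'a measure \<Rightarrow> bool" where
  "non_atomic M \<longleftrightarrow> (\<forall>x. emeasure M {x} = 0)"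

definition Phi :: "('a::metric_space \<Rightarrow> 'a) \<Rightarrow> real \<Rightarrow> 'a \<Rightarrow> 'a set" where
  "Phi f c x = {y. \<forall>n::int. dist (iter_int f n x) (iter_int f n y) \<le> c}"

definition expansive_measure :: "('a::metric_space \<Rightarrow> 'a) \<Rightarrow> 'a measure \<Rightarrow> bool" where
  "expansive_measure f M \<longleftrightarrow> (\<exists>c>0. \<forall>x. emeasure M (Phi f c x) = 0)"

definition measure_expansive :: "('a::metric_space \<Rightarrow> 'a) \<Rightarrow> bool" where
  "measure_expansive f \<longleftrightarrow> (\<exists>c>0. \<forall>\<nu>::'a measure. borel_measure \<nu> \<and> non_atomic \<nu> \<longrightarrow>
      (\<forall>x. emeasure \<nu> (Phi f c x) = 0))"

definition Gamma :: "('a::metric_space \<Rightarrow> 'a) \<Rightarrow> real \<Rightarrow> 'a \<Rightarrow> 'a \<Rightarrow> 'a set" where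
  "Gamma f c x z = {y \<in> ball x c. \<forall>n::int. dist (iter_int f n y) (iter_int f n z) \<le> c}"

definition UE_mu :: "('a::metric_space \<Rightarrow> 'a) \<Rightarrow> 'a measure \<Rightarrow> 'a set" where
  "UE_mu f M = {x. \<exists>c>0. \<forall>z\<in>ball x c. emeasure M (Gamma f c x z) = 0}"

definition UE_M :: "('a::metric_space \<Rightarrow> 'a) \<Rightarrow> 'a set" where
  "UE_M f = {x. \<exists>c>0. \<forall>\<nu>::'a measure. borel_measure \<nu> \<and> non_atomic \<nu> \<longrightarrow>
      (\<forall>z\<in>ball x c. emeasure \<nu> (Gamma f c x z) = 0)}"

definition pseudo_orbit :: "('a::metric_space \<Rightarrow> 'a) \<Rightarrow> real \<Rightarrow> (int \<Rightarrow> 'a) \<Rightarrow> bool" where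
  "pseudo_orbit f \<delta> xs \<longleftrightarrow> (\<forall>n. dist (f (xs n)) (xs (n + 1)) < \<delta>)"

definition traced :: "('a::metric_space \<Rightarrow> 'a) \<Rightarrow> real \<Rightarrow> (int \<Rightarrow> 'a) \<Rightarrow> bool" where
  "traced f \<epsilon> xs \<longleftrightarrow> (\<exists>y. \<forall>n. dist (iter_int f n y) (xs n) < \<epsilon>)"

definition measure_shadowing :: "('a::metric_space \<Rightarrow> 'a) \<Rightarrow> 'a measure \<Rightarrow> bool" where
  "measure_shadowing f M \<longleftrightarrow> (\<forall>\<epsilon>>0. \<exists>\<delta>>0. \<exists>B\<in>sets M. emeasure M (UNIV - B) = 0 \<and>
      (\<forall>xs. pseudo_orbit f \<delta> xs \<and> xs 0 \<in> B \<longrightarrow> traced f \<epsilon> xs))"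

definition Sh_mu :: "('a::metric_space \<Rightarrow> 'a) \<Rightarrow> 'a measure \<Rightarrow> 'a set" where
  "Sh_mu f M = {x. \<forall>\<epsilon>>0. \<exists>\<delta>>0. \<exists>B\<in>sets M. emeasure M (UNIV - B) = 0 \<and>
      (\<forall>xs. pseudo_orbit f \<delta> xs \<and> xs 0 \<in> B \<inter> ball x \<delta> \<longrightarrow> traced f \<epsilon> xs)}"

end

theory Submission
  imports Defs
begin

text \<open>Each pointwise notion differs from its global counterpart only in that the constant may
  depend on the point. Compactness makes it uniform: cover \<open>X\<close> by the balls \<open>B(x, r\<^sub>x/2)\<close>, pass
  to a finite subcover and take \<open>c\<close> below all of its radii \<open>r\<^sub>x/2\<close>. Then every closed ball
  \<open>B[z, c]\<close> lies in some \<open>B(x, r\<^sub>x)\<close>, so \<open>\<Phi>\<^sup>c(z)\<close> is contained in the set \<open>\<Gamma>(z)\<close> of radius \<open>r\<^sub>x\<close>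
  around \<open>x\<close>, and a \<open>c\<close>-pseudo orbit starting at a point of \<open>B[z, c]\<close> is an \<open>r\<^sub>x\<close>-pseudo orbit
  through \<open>B(x, r\<^sub>x)\<close>; for shadowing one intersects the finitely many full-measure sets attached
  to the centres. The sets \<open>\<Phi>\<close> and \<open>\<Gamma>\<close> are Borel because the iterates of a homeomorphism are
  continuous.\<close>

lemma iter_int_0 [simp]: "iter_int f 0 = id"
  by (simp add: iter_int_def)

lemma continuous_on_funpow:
  fixes g :: "'a::topological_space \<Rightarrow> 'a"
  assumes "continuous_on UNIV g"
  shows "continuous_on UNIV (g ^^ n)"
proof (induction n)
  case (Suc n)
  then have "continuous_on UNIV (g \<circ> (g ^^ n))"
    using assms by (intro continuous_on_compose) (auto intro: continuous_on_subset)
  then show ?case by simp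
qed (simp add: id_def)

lemma continuous_on_iter_int:
  assumes "is_homeomorphism f"
  shows "continuous_on UNIV (iter_int f n)"
  using assms unfolding is_homeomorphism_def iter_int_def by (simp add: continuous_on_funpow)

lemma closed_Phi:
  assumes "is_homeomorphism f"
  shows "closed (Phi f c z)"
proof -
  have "Phi f c z = (\<Inter>n. {y. dist (iter_int f n z) (iter_int f n y) \<le> c})"
    unfolding Phi_def by blast
  moreover have "closed {y. dist (iter_int f n z) (iter_int f n y) \<le> c}" for n
    by (intro closed_Collect_le continuous_on_dist continuous_on_const
        continuous_on_iter_int[OF assms])
  ultimately show ?thesis by auto
qed

lemma Gamma_eq_ball_Int_Phi: "Gamma f c x z = ball x c \<inter> Phi f c z"
  unfolding Gamma_def Phi_def by (auto simp: dist_commute)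

lemma Phi_in_borel: "is_homeomorphism f \<Longrightarrow> Phi f c z \<in> sets borel"
  by (simp add: borel_closed closed_Phi)

lemma Gamma_in_borel: "is_homeomorphism f \<Longrightarrow> Gamma f c x z \<in> sets borel"
  unfolding Gamma_eq_ball_Int_Phi by (intro sets.Int borel_open open_ball Phi_in_borel)

lemma Phi_subset_cball: "Phi f c z \<subseteq> cball z c"
  unfolding Phi_def by (force dest: spec[of _ 0])

lemma Phi_mono: "c \<le> c' \<Longrightarrow> Phi f c z \<subseteq> Phi f c' z"
  unfolding Phi_def by (auto intro: order_trans)

lemma Phi_subset_Gamma:
  assumes "cball z c \<subseteq> ball x r" "c \<le> r"
  shows "Phi f c z \<subseteq> Gamma f r x z"
  using assms Phi_subset_cball Phi_mono unfolding Gamma_eq_ball_Int_Phi by blast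

lemma pseudo_orbit_mono: "pseudo_orbit f \<delta> xs \<Longrightarrow> \<delta> \<le> \<delta>' \<Longrightarrow> pseudo_orbit f \<delta>' xs"
  unfolding pseudo_orbit_def by (meson less_le_trans)

lemma compact_uniform_ball_refinement:
  fixes r :: "'a::metric_space \<Rightarrow> real"
  assumes "compact S" and r: "\<And>x. x \<in> S \<Longrightarrow> r x > 0"
  shows "\<exists>F c. finite F \<and> c > 0 \<and> (\<forall>y\<in>S. \<exists>x\<in>F. cball y c \<subseteq> ball x (r x) \<and> c \<le> r x)"
proof -
  have "S \<subseteq> (\<Union>x\<in>S. ball x (r x / 2))"
    using r by force
  then obtain F where F: "F \<subseteq> S" "finite F" "S \<subseteq> (\<Union>x\<in>F. ball x (r x / 2))"
    using compactE_image[OF \<open>compact S\<close>, of S "\<lambda>x. ball x (r x / 2)"] by blast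
  define c where "c = Min (insert 1 ((\<lambda>x. r x / 2) ` F))"
  have "c > 0"
    using F r unfolding c_def by (subst Min_gr_iff) auto
  have c_le: "c \<le> r x / 2" if "x \<in> F" for x
    using F(2) that unfolding c_def by (intro Min_le) auto
  have "\<exists>x\<in>F. cball y c \<subseteq> ball x (r x) \<and> c \<le> r x" if "y \<in> S" for y
  proof -
    obtain x where x: "x \<in> F" "dist x y < r x / 2"
      using F(3) \<open>y \<in> S\<close> by auto
    have "cball y c \<subseteq> ball x (r x)"
    proof
      fix w assume "w \<in> cball y c"
      then have "dist x w \<le> dist x y + c"
        by (metis dist_triangle mem_cball add_left_mono order_trans)
      then show "w \<in> ball x (r x)"
        using x c_le[OF x(1)] by simp
    qed
    then show ?thesis
      using x c_le[OF x(1)] \<open>c > 0\<close> by force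
  qed
  with F(2) \<open>c > 0\<close> show ?thesis
    by blast
qed

text \<open>\<open>P = (\<lambda>\<nu>. \<nu> = \<mu>)\<close> recovers expansiveness of \<open>\<mu>\<close> and \<open>UE\<^sup>\<mu>\<close>; the class of non-atomic Borel
  measures recovers measure-expansiveness and \<open>UE\<^sup>M\<close>.\<close>

definition expansive_for :: "('a::metric_space \<Rightarrow> 'a) \<Rightarrow> ('a measure \<Rightarrow> bool) \<Rightarrow> bool" where
  "expansive_for f P \<longleftrightarrow> (\<exists>c>0. \<forall>\<nu>. P \<nu> \<longrightarrow> (\<forall>z. emeasure \<nu> (Phi f c z) = 0))"

definition UE_for :: "('a::metric_space \<Rightarrow> 'a) \<Rightarrow> ('a measure \<Rightarrow> bool) \<Rightarrow> 'a set" where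
  "UE_for f P = {x. \<exists>c>0. \<forall>\<nu>. P \<nu> \<longrightarrow> (\<forall>z\<in>ball x c. emeasure \<nu> (Gamma f c x z) = 0)}"

lemma expansive_measure_eq_expansive_for: "expansive_measure f M \<longleftrightarrow> expansive_for f (\<lambda>\<nu>. \<nu> = M)"
  by (simp add: expansive_measure_def expansive_for_def)

lemma UE_mu_eq_UE_for: "UE_mu f M = UE_for f (\<lambda>\<nu>. \<nu> = M)"
  by (simp add: UE_mu_def UE_for_def)

lemma measure_expansive_eq_expansive_for:
  "measure_expansive f \<longleftrightarrow> expansive_for f (\<lambda>\<nu>. borel_measure \<nu> \<and> non_atomic \<nu>)"
  by (simp add: measure_expansive_def expansive_for_def)

lemma UE_M_eq_UE_for: "UE_M f = UE_for f (\<lambda>\<nu>. borel_measure \<nu> \<and> non_atomic \<nu>)"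
  by (simp add: UE_M_def UE_for_def)

lemma expansive_for_imp_UE_for_UNIV:
  assumes "is_homeomorphism f" "\<And>\<nu>. P \<nu> \<Longrightarrow> sets \<nu> = sets borel" "expansive_for f P"
  shows "UE_for f P = UNIV"
proof -
  obtain c where "c > 0" and c: "\<And>\<nu> z. P \<nu> \<Longrightarrow> emeasure \<nu> (Phi f c z) = 0"
    using assms(3) unfolding expansive_for_def by blast
  have "emeasure \<nu> (Gamma f c x z) = 0" if "P \<nu>" for \<nu> x z
    using emeasure_eq_0[of "Phi f c z" \<nu> "Gamma f c x z"] c[OF that] Phi_in_borel[OF assms(1)]
      assms(2)[OF that] by (auto simp: Gamma_eq_ball_Int_Phi)
  then show ?thesis
    unfolding UE_for_def using \<open>c > 0\<close> by blast
qed

lemma UE_for_UNIV_imp_expansive_for: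
  fixes f :: "'a::metric_space \<Rightarrow> 'a"
  assumes "compact (UNIV :: 'a set)" "is_homeomorphism f"
    "\<And>\<nu>. P \<nu> \<Longrightarrow> sets \<nu> = sets borel" "UE_for f P = UNIV"
  shows "expansive_for f P"
proof -
  have "\<forall>x. \<exists>r. r > 0 \<and> (\<forall>\<nu>. P \<nu> \<longrightarrow> (\<forall>z\<in>ball x r. emeasure \<nu> (Gamma f r x z) = 0))"
    using assms(4) unfolding UE_for_def by blast
  then obtain r :: "'a \<Rightarrow> real" where
    r: "\<forall>x. r x > 0 \<and> (\<forall>\<nu>. P \<nu> \<longrightarrow> (\<forall>z\<in>ball x (r x). emeasure \<nu> (Gamma f (r x) x z) = 0))"
    by (rule choice[THEN exE])
  then have "\<And>x. x \<in> UNIV \<Longrightarrow> r x > 0"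
    by blast
  from compact_uniform_ball_refinement[of UNIV r, OF assms(1) this]
  obtain F c where "c > 0" and refine: "\<forall>z. \<exists>x\<in>F. cball z c \<subseteq> ball x (r x) \<and> c \<le> r x"
    by blast
  have "emeasure \<nu> (Phi f c z) = 0" if "P \<nu>" for \<nu> z
  proof -
    obtain x where x: "cball z c \<subseteq> ball x (r x)" "c \<le> r x"
      using refine by blast
    have "z \<in> ball x (r x)"
      using x(1) \<open>c > 0\<close> by (meson centre_in_cball less_imp_le subsetD)
    then have null: "emeasure \<nu> (Gamma f (r x) x z) = 0"
      using r that by simp
    have "Gamma f (r x) x z \<in> sets \<nu>"
      using Gamma_in_borel[OF assms(2)] assms(3)[OF that] by simp
    from emeasure_eq_0[OF this null Phi_subset_Gamma[OF x]] show ?thesis .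
  qed
  then show ?thesis
    unfolding expansive_for_def using \<open>c > 0\<close> by blast
qed

lemma expansive_for_iff_UE_for_UNIV:
  fixes f :: "'a::metric_space \<Rightarrow> 'a"
  assumes "compact (UNIV :: 'a set)" "is_homeomorphism f"
    "\<And>\<nu>. P \<nu> \<Longrightarrow> sets \<nu> = sets borel"
  shows "expansive_for f P \<longleftrightarrow> UE_for f P = UNIV"
  using expansive_for_imp_UE_for_UNIV UE_for_UNIV_imp_expansive_for assms by blast

lemma conull_finite_INT:
  assumes "finite F" "space M = UNIV"
    and "\<And>x. x \<in> F \<Longrightarrow> B x \<in> sets M" "\<And>x. x \<in> F \<Longrightarrow> emeasure M (UNIV - B x) = 0"
  shows "(\<Inter>x\<in>F. B x) \<in> sets M" "emeasure M (UNIV - (\<Inter>x\<in>F. B x)) = 0"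
proof -
  have "UNIV - B x \<in> null_sets M" if "x \<in> F" for x
    using assms(2-4) that sets.compl_sets[of "B x" M] by (auto intro: null_setsI)
  then have null: "(\<Union>x\<in>F. UNIV - B x) \<in> null_sets M"
    using assms(1) by (intro null_sets_UN') (auto intro: countable_finite)
  have eq: "(\<Inter>x\<in>F. B x) = UNIV - (\<Union>x\<in>F. UNIV - B x)"
    by blast
  show "(\<Inter>x\<in>F. B x) \<in> sets M"
    unfolding eq using null assms(2) sets.compl_sets[of _ M] by auto
  have "UNIV - (\<Inter>x\<in>F. B x) = (\<Union>x\<in>F. UNIV - B x)"
    by blast
  then show "emeasure M (UNIV - (\<Inter>x\<in>F. B x)) = 0"
    using null by (simp add: null_setsD1)
qed

lemma Sh_mu_UNIV_imp_measure_shadowing: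
  fixes f :: "'a::metric_space \<Rightarrow> 'a"
  assumes "compact (UNIV :: 'a set)" "space M = UNIV" "Sh_mu f M = UNIV"
  shows "measure_shadowing f M"
  unfolding measure_shadowing_def
proof (intro allI impI)
  fix \<epsilon> :: real
  assume "\<epsilon> > 0"
  then have "\<forall>x. \<exists>\<delta>. \<delta> > 0 \<and> (\<exists>B. B \<in> sets M \<and> emeasure M (UNIV - B) = 0 \<and>
      (\<forall>xs. pseudo_orbit f \<delta> xs \<and> xs 0 \<in> B \<inter> ball x \<delta> \<longrightarrow> traced f \<epsilon> xs))"
    using assms(3) unfolding Sh_mu_def by blast
  from choice[OF this] obtain \<delta> :: "'a \<Rightarrow> real" where \<delta>: "\<And>x. \<delta> x > 0"
    and conull_shadowing: "\<forall>x. \<exists>B. B \<in> sets M \<and> emeasure M (UNIV - B) = 0 \<and>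
      (\<forall>xs. pseudo_orbit f (\<delta> x) xs \<and> xs 0 \<in> B \<inter> ball x (\<delta> x) \<longrightarrow> traced f \<epsilon> xs)"
    by blast
  from choice[OF conull_shadowing] obtain B where B: "\<forall>x. B x \<in> sets M \<and> emeasure M (UNIV - B x) = 0 \<and>
      (\<forall>xs. pseudo_orbit f (\<delta> x) xs \<and> xs 0 \<in> B x \<inter> ball x (\<delta> x) \<longrightarrow> traced f \<epsilon> xs)"
    by blast
  obtain F c where "finite F" "c > 0"
    and refine: "\<forall>y. \<exists>x\<in>F. cball y c \<subseteq> ball x (\<delta> x) \<and> c \<le> \<delta> x"
    using compact_uniform_ball_refinement[of UNIV \<delta>, OF assms(1) \<delta>] by blast
  have "traced f \<epsilon> xs" if "pseudo_orbit f c xs" "xs 0 \<in> (\<Inter>x\<in>F. B x)" for xs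
  proof -
    obtain x where "x \<in> F" and x: "cball (xs 0) c \<subseteq> ball x (\<delta> x)" "c \<le> \<delta> x"
      using refine by blast
    have "xs 0 \<in> ball x (\<delta> x)"
      using x(1) \<open>c > 0\<close> by (meson centre_in_cball less_imp_le subsetD)
    then show ?thesis
      using B pseudo_orbit_mono[OF that(1) x(2)] that(2) \<open>x \<in> F\<close> by blast
  qed
  moreover have "(\<Inter>x\<in>F. B x) \<in> sets M" "emeasure M (UNIV - (\<Inter>x\<in>F. B x)) = 0"
    using conull_finite_INT[OF \<open>finite F\<close> assms(2), of B] B by blast+
  ultimately show "\<exists>\<delta>>0. \<exists>B\<in>sets M. emeasure M (UNIV - B) = 0 \<and>
      (\<forall>xs. pseudo_orbit f \<delta> xs \<and> xs 0 \<in> B \<longrightarrow> traced f \<epsilon> xs)"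
    using \<open>c > 0\<close> by blast
qed

lemma measure_shadowing_iff_Sh_mu_UNIV:
  fixes f :: "'a::metric_space \<Rightarrow> 'a"
  assumes "compact (UNIV :: 'a set)" "space M = UNIV"
  shows "measure_shadowing f M \<longleftrightarrow> Sh_mu f M = UNIV"
proof
  show "measure_shadowing f M \<Longrightarrow> Sh_mu f M = UNIV"
    unfolding measure_shadowing_def Sh_mu_def by blast
qed (rule Sh_mu_UNIV_imp_measure_shadowing[OF assms])

theorem proposition3p4:
  fixes f :: "'a::metric_space \<Rightarrow> 'a" and M :: "'a measure"
  assumes "compact (UNIV :: 'a set)"
    and "is_homeomorphism f"
    and "borel_measure M"
    and "emeasure M UNIV > 0"
  shows "(expansive_measure f M \<longleftrightarrow> UE_mu f M = UNIV)
       \<and> (measure_expansive f \<longleftrightarrow> UE_M f = UNIV)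
       \<and> (measure_shadowing f M \<longleftrightarrow> Sh_mu f M = UNIV)"
proof -
  have "sets M = sets borel"
    using assms(3) by (simp add: borel_measure_def)
  then have "space M = UNIV"
    using sets_eq_imp_space_eq by fastforce
  have "expansive_measure f M \<longleftrightarrow> UE_mu f M = UNIV"
    unfolding expansive_measure_eq_expansive_for UE_mu_eq_UE_for
    by (rule expansive_for_iff_UE_for_UNIV[OF assms(1,2)]) (simp add: \<open>sets M = sets borel\<close>)
  moreover have "measure_expansive f \<longleftrightarrow> UE_M f = UNIV"
    unfolding measure_expansive_eq_expansive_for UE_M_eq_UE_for
    by (rule expansive_for_iff_UE_for_UNIV[OF assms(1,2)]) (simp add: borel_measure_def)
  ultimately show ?thesis
    using measure_shadowing_iff_Sh_mu_UNIV[OF assms(1) \<open>space M = UNIV\<close>] by blast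
qed

end
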